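(* Let $N\ge1$ and $\gamma=(\gamma_\ell)_{-N\le\ell\le N}\in\mathbb{C}^{2N+1}$ be fixed, and for $\varepsilon>0$ let $\Box_\varepsilon\in\mathcal O_{N,\varepsilon}$ be the operator with coefficients $c_\ell=\gamma_\ell/\varepsilon$. The following six properties are equivalent (all limits are as $\varepsilon\to0^+$, and "locally uniformly in $]a,b[$" means uniformly on $[a+\delta,b-\delta]$ for every $\delta>0$): (a) D.E.L. converges to C.E.L.: for all smooth $P,Q,R:[a,b]\to\mathbb{R}^{d\times d}$ with $P,Q$ symmetric and $R$ skew-symmetric, all smooth $J_1,J_2:[a,b]\to\mathbb{R}^d$, and all $\mathbf x\in\mathcal C^2([a,b],\mathbb{R}^d)$, $\Theta(\mathbf x)\to-P\ddot{\mathbf x}+(-\dot P+2R)\dot{\mathbf x}+(\dot R+Q)\mathbf x-\dot J_1+J_2$ locally uniformly in $]a,b[$; (b) for all $\mathbf x\in\mathcal C^2([a,b],\mathbb{R}^d)$, $\Box_\varepsilon\mathbf x\to\dot{\mathbf x}$ locally uniformly in $]a,b[$; (c) for all $\mathbf x\in\mathcal C^2([a,b],\mathbb{R}^d)$, $\Box_{-\varepsilon}\mathbf x\to-\dot{\mathbf x}$ locally uniformly in $]a,b[$; (d) the functions $t\mapsto\Box_\varepsilon1$ and $t\mapsto\Box_\varepsilon t$ converge respectively to $0$ and $1$ locally uniformly in $]a,b[$; (e) $\Box_\varepsilon\in\tilde{\mathcal O}_{N,\varepsilon}$, i.e. $\sum_{\ell=-N}^N\gamma_\ell=0$ and $\sum_{\ell=-N}^N\ell\gamma_\ell=1$;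 (f) there exist $k_1,\dots,k_{2N-1}\in\mathbb{C}$ such that $\Box_\varepsilon\mathbf x(t)=\Box^{[1,0]}_\varepsilon\mathbf x(t)+\sum_{\ell=-(N-1)}^{N-1}k_{\ell+N}\,\Box^{[1,-1]}_\varepsilon\mathbf x(t-\ell\varepsilon)$ for all $\mathbf x$ and all $t$ in the safety interval $[a+2N\varepsilon,b-2N\varepsilon]$ (equivalently, the coefficient vector $\gamma$ equals that of the forward difference, $\gamma_0=-1,\gamma_1=1$, plus $\sum_{\ell}k_{\ell+N}$ times the vector with entries $1,-2,1$ at indices $-\ell-1,-\ell,-\ell+1$).
   Context: Fix $[a,b]$. For $\varepsilon>0$ and each integer $\ell$, $\chi_\ell$ is the indicator function of $[\max(a,a+\ell\varepsilon),\min(b,b+\ell\varepsilon)]$; a term multiplied by a vanishing characteristic function is $0$. Given coefficients $(c_\ell)_{-N\le\ell\le N}$, $\Box_\varepsilon\mathbf x(t)=\sum_{\ell=-N}^{N}c_\ell\,\mathbf x(t+\ell\varepsilon)\chi_{-\ell}(t)$ (componentwise) and $\Box_{-\varepsilon}\mathbf f(t)=\sum_{\ell=-N}^{N}c_\ell\,\mathbf f(t-\ell\varepsilon)\chi_{\ell}(t)$ (same coefficients). $\mathcal O_{N,\varepsilon}$ is the set of such operators with $c_\ell=\gamma_\ell/\varepsilon$, $\gamma_\ell\in\mathbb{C}$ independent of $\varepsilon$; $\tilde{\mathcal O}_{N,\varepsilon}\subset\mathcal O_{N,\varepsilon}$ consists of those with $\Box_\varepsilon1=0$ and $\Box_\varepsilon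 t=1$ for $t$ in the safety interval $[a+2N\varepsilon,b-2N\varepsilon]$. For $r,s\in\mathbb{C}$, $\Box^{[r,s]}_\varepsilon\mathbf x(t)=-\chi_{1}(t)\frac{s}{\varepsilon}\mathbf x(t-\varepsilon)+\frac{s-r}{\varepsilon}\mathbf x(t)+\chi_{-1}(t)\frac{r}{\varepsilon}\mathbf x(t+\varepsilon)$. For matrix/vector functions $P,Q,R,J_1,J_2$ on $[a,b]$ and $\mathbf x:[a,b]\to\mathbb{R}^d$, \[ \Theta(\mathbf x)(t)=\Box_{-\varepsilon}(P\,\Box_\varepsilon\mathbf x)(t)-\Box_{-\varepsilon}(R\mathbf x)(t)+R(t)\Box_\varepsilon\mathbf x(t)+Q(t)\mathbf x(t)+\Box_{-\varepsilon}J_1(t)+J_2(t), \] the left-hand side of the discrete Euler–Lagrange equation of the quadratic lagrangian $\frac12{}^t\dot{\mathbf x}P\dot{\mathbf x}+\frac12{}^t\mathbf xQ\mathbf x+{}^t\mathbf xR\dot{\mathbf x}+{}^tJ_1\dot{\mathbf x}+{}^tJ_2\mathbf x+J_3$ (${}^t$ denotes transpose). *)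

theory Defs
  imports "HOL-Analysis.Analysis"
begin

definition chi :: "real \<Rightarrow> real \<Rightarrow> real \<Rightarrow> int \<Rightarrow> real \<Rightarrow> complex" where
  "chi a b \<epsilon> l t =
     (if max a (a + of_int l * \<epsilon>) \<le> t \<and> t \<le> min b (b + of_int l * \<epsilon>) then 1 else 0)"

definition boxp :: "real \<Rightarrow> real \<Rightarrow> nat \<Rightarrow> (int \<Rightarrow> complex) \<Rightarrow> real
    \<Rightarrow> (real \<Rightarrow> complex) \<Rightarrow> real \<Rightarrow> complex" where
  "boxp a b N \<gamma> \<epsilon> f t =
     (\<Sum>l\<in>{- int N..int N}. \<gamma> l / complex_of_real \<epsilon> * f (t + of_int l * \<epsilon>) * chi a b \<epsilon> (- l) t)"

definition boxm :: "real \<Rightarrow> real \<Rightarrow> nat \<Rightarrow> (int \<Rightarrow> complex) \<Rightarrow> real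
    \<Rightarrow> (real \<Rightarrow> complex) \<Rightarrow> real \<Rightarrow> complex" where
  "boxm a b N \<gamma> \<epsilon> f t =
     (\<Sum>l\<in>{- int N..int N}. \<gamma> l / complex_of_real \<epsilon> * f (t - of_int l * \<epsilon>) * chi a b \<epsilon> l t)"

definition boxrs :: "real \<Rightarrow> real \<Rightarrow> complex \<Rightarrow> complex \<Rightarrow> real
    \<Rightarrow> (real \<Rightarrow> complex) \<Rightarrow> real \<Rightarrow> complex" where
  "boxrs a b r s \<epsilon> f t =
     - chi a b \<epsilon> 1 t * (s / complex_of_real \<epsilon>) * f (t - \<epsilon>)
     + (s - r) / complex_of_real \<epsilon> * f t
     + chi a b \<epsilon> (-1) t * (r / complex_of_real \<epsilon>) * f (t + \<epsilon>)"

definition boxpv :: "real \<Rightarrow> real \<Rightarrow> nat \<Rightarrow> (int \<Rightarrow> complex) \<Rightarrow> real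
    \<Rightarrow> (real \<Rightarrow> complex ^ 'd) \<Rightarrow> real \<Rightarrow> complex ^ 'd" where
  "boxpv a b N \<gamma> \<epsilon> f t = (\<chi> i. boxp a b N \<gamma> \<epsilon> (\<lambda>s. f s $ i) t)"

definition boxmv :: "real \<Rightarrow> real \<Rightarrow> nat \<Rightarrow> (int \<Rightarrow> complex) \<Rightarrow> real
    \<Rightarrow> (real \<Rightarrow> complex ^ 'd) \<Rightarrow> real \<Rightarrow> complex ^ 'd" where
  "boxmv a b N \<gamma> \<epsilon> f t = (\<chi> i. boxm a b N \<gamma> \<epsilon> (\<lambda>s. f s $ i) t)"

definition boxrsv :: "real \<Rightarrow> real \<Rightarrow> complex \<Rightarrow> complex \<Rightarrow> real
    \<Rightarrow> (real \<Rightarrow> complex ^ 'd) \<Rightarrow> real \<Rightarrow> complex ^ 'd" where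
  "boxrsv a b r s \<epsilon> f t = (\<chi> i. boxrs a b r s \<epsilon> (\<lambda>s'. f s' $ i) t)"

definition cvec :: "real ^ 'd \<Rightarrow> complex ^ 'd" where
  "cvec v = (\<chi> i. complex_of_real (v $ i))"

definition cmat :: "real ^ 'd ^ 'e \<Rightarrow> complex ^ 'd ^ 'e" where
  "cmat M = (\<chi> i j. complex_of_real (M $ i $ j))"

definition Theta :: "real \<Rightarrow> real \<Rightarrow> nat \<Rightarrow> (int \<Rightarrow> complex) \<Rightarrow> real
    \<Rightarrow> (real \<Rightarrow> real ^ 'd ^ 'd) \<Rightarrow> (real \<Rightarrow> real ^ 'd ^ 'd) \<Rightarrow> (real \<Rightarrow> real ^ 'd ^ 'd)
    \<Rightarrow> (real \<Rightarrow> real ^ 'd) \<Rightarrow> (real \<Rightarrow> real ^ 'd)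
    \<Rightarrow> (real \<Rightarrow> real ^ 'd) \<Rightarrow> real \<Rightarrow> complex ^ 'd" where
  "Theta a b N \<gamma> \<epsilon> P Q R J1 J2 x t =
     boxmv a b N \<gamma> \<epsilon> (\<lambda>s. cmat (P s) *v boxpv a b N \<gamma> \<epsilon> (\<lambda>u. cvec (x u)) s) t
     - boxmv a b N \<gamma> \<epsilon> (\<lambda>s. cmat (R s) *v cvec (x s)) t
     + cmat (R t) *v boxpv a b N \<gamma> \<epsilon> (\<lambda>u. cvec (x u)) t
     + cmat (Q t) *v cvec (x t)
     + boxmv a b N \<gamma> \<epsilon> (\<lambda>u. cvec (J1 u)) t
     + cvec (J2 t)"

definition C2_on :: "real set \<Rightarrow> (real \<Rightarrow> 'v::real_normed_vector) \<Rightarrow> (real \<Rightarrow> 'v) \<Rightarrow> (real \<Rightarrow> 'v) \<Rightarrow> bool" where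
  "C2_on S x x' x'' \<longleftrightarrow>
     (\<forall>t\<in>S. (x has_vector_derivative x' t) (at t within S)) \<and>
     (\<forall>t\<in>S. (x' has_vector_derivative x'' t) (at t within S)) \<and>
     continuous_on S x''"

definition smooth_on :: "real set \<Rightarrow> (real \<Rightarrow> 'v::real_normed_vector) \<Rightarrow> bool" where
  "smooth_on S f \<longleftrightarrow>
     (\<exists>D :: nat \<Rightarrow> real \<Rightarrow> 'v. (\<forall>t\<in>S. D 0 t = f t) \<and>
        (\<forall>k. \<forall>t\<in>S. (D k has_vector_derivative D (Suc k) t) (at t within S)))"

definition loc_unif_conv :: "real \<Rightarrow> real \<Rightarrow> (real \<Rightarrow> real \<Rightarrow> 'v::metric_space) \<Rightarrow> (real \<Rightarrow> 'v) \<Rightarrow> bool" where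
  "loc_unif_conv a b F G \<longleftrightarrow>
     (\<forall>\<delta>>0. uniform_limit {a + \<delta>..b - \<delta>} F G (at_right 0))"

end

theory Submission
  imports Defs
begin

(* For fixed coefficients gamma_l (|l| <= N) the operator Box_eps acts, at points whose stencil
   t + l*eps (|l| <= N) stays inside [a,b], as the difference quotient
   diff_quot eps f t = sum_l gamma_l / eps * f (t + l*eps), and Box_{-eps} as -diff_quot (-eps).
   Everything hinges on the two moment conditions  sum gamma_l = 0, sum l*gamma_l = 1
   (statement (e)), which we use as a hub:

   For the test functions 1 and t the difference quotient is explicit:
     diff_quot h 1 t = m0/h and diff_quot h id t = m0*t/h + m1.  Convergence at a single
     interior point therefore forces m0 = 0 and m1 = 1 (moments_from_limits); the test
     functions are admissible in (a), (b), (c) and (d), and also in (f).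
   * Sufficiency.  If the moments are right, diff_quot h f - f' is a difference quotient of
     f u - u f'(t), whose derivative is small near t by uniform continuity of f'; a Lipschitz
     estimate for difference quotients (diff_quot_bound) gives (b), (c), (d).  For (a) the
     only non-trivial term is Box_{-eps}(p * Box_eps x) -> -(p x')': writing Box_eps x = x' + r
     with r and r' uniformly small, the remainder diff_quot (-h) (p r) is again controlled by
     the Lipschitz estimate.  For (f) a sequence with vanishing zeroth and first moment is a
     second difference of a finitely supported sequence (summation_by_parts_twice), the
     ramp convolution of the defect gamma - (forward difference). *)

lemma norm_diff_le_deriv_bound:
  fixes f :: "real \<Rightarrow> 'b::real_normed_vector"
  assumes der: "\<And>u. u \<in> {c..d} \<Longrightarrow> (f has_vector_derivative f' u) (at u within {c..d})"
    and bound: "\<And>u. u \<in> {c..d} \<Longrightarrow> norm (f' u) \<le> B"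
    and "x \<in> {c..d}" "y \<in> {c..d}"
  shows "norm (f x - f y) \<le> B * \<bar>x - y\<bar>"
proof -
  have "norm (f x - f y) \<le> B * norm (x - y)"
  proof (rule differentiable_bound[where f'="\<lambda>u h. h *\<^sub>R f' u"])
    show "(f has_derivative (\<lambda>h. h *\<^sub>R f' u)) (at u within {c..d})" if "u \<in> {c..d}" for u
      using der[OF that] by (simp add: has_vector_derivative_def)
    show "onorm (\<lambda>h. h *\<^sub>R f' u) \<le> B" if "u \<in> {c..d}" for u
      using bound[OF that] by (simp add: onorm_scaleR_left[OF bounded_linear_ident] onorm_id)
  qed (use assms in auto)
  then show ?thesis by simp
qed

lemma continuous_on_interval_bound:
  fixes f :: "real \<Rightarrow> 'b::real_normed_vector"
  assumes "continuous_on {a..b} f"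
  obtains M where "M > 0" "\<And>t. t \<in> {a..b} \<Longrightarrow> norm (f t) \<le> M"
proof -
  have "bounded (f ` {a..b})"
    using assms by (intro compact_imp_bounded compact_continuous_image) auto
  then show ?thesis using that by (auto simp: bounded_pos)
qed

lemma uniform_limit_finite_sum:
  fixes F :: "'i \<Rightarrow> 'a \<Rightarrow> 'b \<Rightarrow> 'c::real_normed_vector"
  assumes "finite I" "\<And>i. i \<in> I \<Longrightarrow> uniform_limit S (F i) (G i) net"
  shows "uniform_limit S (\<lambda>h t. \<Sum>i\<in>I. F i h t) (\<lambda>t. \<Sum>i\<in>I. G i t) net"
  using assms by (induction I rule: finite_induct) (simp_all add: uniform_limit_const uniform_limit_add)

lemma uniform_limit_vec_components:
  fixes F :: "'a \<Rightarrow> 'b \<Rightarrow> 'c::real_normed_vector ^ 'd"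
  assumes "\<And>i. uniform_limit S (\<lambda>h t. F h t $ i) (\<lambda>t. G t $ i) net"
  shows "uniform_limit S F G net"
proof (rule uniform_limitI)
  fix e :: real assume "e > 0"
  define e' where "e' = e / (real CARD('d) + 1)"
  have "e' > 0" using \<open>e > 0\<close> by (simp add: e'_def)
  have "\<forall>\<^sub>F h in net. \<forall>i. \<forall>t\<in>S. dist (F h t $ i) (G t $ i) < e'"
    using uniform_limitD[OF assms \<open>e' > 0\<close>] by (intro eventually_all_finite) auto
  then show "\<forall>\<^sub>F h in net. \<forall>t\<in>S. dist (F h t) (G t) < e"
  proof (rule eventually_mono, intro ballI)
    fix h t assume close: "\<forall>i. \<forall>t\<in>S. dist (F h t $ i) (G t $ i) < e'" and "t \<in> S"
    have "dist (F h t) (G t) \<le> (\<Sum>i\<in>UNIV. dist (F h t $ i) (G t $ i))"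
      unfolding dist_vec_def by (rule L2_set_le_sum) simp
    also have "\<dots> \<le> real CARD('d) * e'"
      using close \<open>t \<in> S\<close> by (intro sum_bounded_above[where K=e', simplified] less_imp_le) auto
    also have "\<dots> < e" using \<open>e > 0\<close> by (simp add: e'_def field_simps)
    finally show "dist (F h t) (G t) < e" .
  qed
qed

lemma uniform_limit_at_rightI:
  fixes F :: "real \<Rightarrow> 'b \<Rightarrow> 'c::metric_space"
  assumes "\<And>e. e > 0 \<Longrightarrow> \<exists>d>0. \<forall>h t. 0 < h \<longrightarrow> h < d \<longrightarrow> t \<in> S \<longrightarrow> dist (F h t) (G t) \<le> e"
  shows "uniform_limit S F G (at_right 0)"
proof (rule uniform_limitI)
  fix e :: real assume "e > 0"
  then obtain d where "d > 0" "\<forall>h t. 0 < h \<longrightarrow> h < d \<longrightarrow> t \<in> S \<longrightarrow> dist (F h t) (G t) \<le> e / 2"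
    using assms[of "e / 2"] by auto
  then show "\<forall>\<^sub>F h in at_right 0. \<forall>t\<in>S. dist (F h t) (G t) < e"
    unfolding eventually_at_right_field using \<open>e > 0\<close> by (intro exI[of _ d]) force
qed

lemma eventually_const_limit:
  fixes f :: "real \<Rightarrow> 'b::t2_space"
  assumes "(f \<longlongrightarrow> L) (at_right 0)" and "eventually (\<lambda>h. f h = c) (at_right 0)"
  shows "c = L"
proof -
  have "((\<lambda>h::real. c) \<longlongrightarrow> L) (at_right 0)"
    using assms(1) tendsto_cong[OF assms(2), of L] by simp
  then show ?thesis by (simp add: tendsto_const_iff)
qed

lemma moments_from_limits:
  fixes f g :: "real \<Rightarrow> complex"
  assumes f: "(f \<longlongrightarrow> 0) (at_right 0)" and g: "(g \<longlongrightarrow> L) (at_right 0)"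
    and ev: "eventually (\<lambda>h. f h = m / of_real h \<and> g h = m * c / of_real h + s) (at_right 0)"
  shows "m = 0 \<and> s = L"
proof -
  have pos: "eventually (\<lambda>h::real. h > 0) (at_right 0)"
    by (simp add: eventually_at_right_less)
  have "((\<lambda>h. of_real h * f h) \<longlongrightarrow> of_real 0 * 0) (at_right 0)"
    by (intro tendsto_mult f tendsto_of_real tendsto_ident_at)
  moreover have "eventually (\<lambda>h. of_real h * f h = m) (at_right 0)"
    using ev pos by eventually_elim simp
  ultimately have "m = 0" by (simp add: eventually_const_limit)
  moreover have "eventually (\<lambda>h. g h = s) (at_right 0)"
    using ev by eventually_elim (simp add: \<open>m = 0\<close>)
  ultimately show ?thesis using eventually_const_limit[OF g] by simp
qed

definition C1_on :: "real set \<Rightarrow> (real \<Rightarrow> 'v::real_normed_vector) \<Rightarrow> (real \<Rightarrow> 'v) \<Rightarrow> bool" where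
  "C1_on S f f' \<longleftrightarrow> (\<forall>t\<in>S. (f has_vector_derivative f' t) (at t within S)) \<and> continuous_on S f'"

lemma C1_onD:
  assumes "C1_on S f f'"
  shows "\<And>t. t \<in> S \<Longrightarrow> (f has_vector_derivative f' t) (at t within S)"
    and "continuous_on S f'" and "continuous_on S f"
  using assms continuous_on_vector_derivative unfolding C1_on_def by auto

lemma C2_on_C1_on:
  assumes "C2_on S x x' x''"
  shows "C1_on S x x'" and "C1_on S x' x''"
  using assms unfolding C2_on_def C1_on_def by (auto intro: continuous_on_vector_derivative)

lemma C1_on_mult:
  fixes p x :: "real \<Rightarrow> 'a::real_normed_algebra"
  assumes "C1_on S p p'" and "C1_on S x x'"
  shows "C1_on S (\<lambda>t. p t * x t) (\<lambda>t. p' t * x t + p t * x' t)"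
proof -
  have "continuous_on S p" "continuous_on S x"
    using assms by (simp_all add: C1_onD)
  then show ?thesis
    using assms unfolding C1_on_def by (auto intro!: derivative_eq_intros continuous_intros)
qed

lemma C1_on_bounded_linear:
  assumes "bounded_linear L" and "C1_on S f f'"
  shows "C1_on S (\<lambda>t. L (f t)) (\<lambda>t. L (f' t))"
  using assms unfolding C1_on_def
  by (auto intro: bounded_linear.has_vector_derivative bounded_linear.continuous_on)

lemma smooth_on_C1_on:
  fixes f :: "real \<Rightarrow> 'v::real_normed_vector"
  assumes "a < b" and "smooth_on {a..b} f"
    and der: "\<forall>t\<in>{a..b}. (f has_vector_derivative f' t) (at t within {a..b})"
  shows "C1_on {a..b} f f'"
proof -
  obtain D where D0: "\<forall>t\<in>{a..b}. D 0 t = f t"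
    and D: "\<forall>k. \<forall>t\<in>{a..b}. (D k has_vector_derivative D (Suc k) t) (at t within {a..b})"
    using assms(2) unfolding smooth_on_def by blast
  have "f' t = D 1 t" if t: "t \<in> {a..b}" for t
  proof -
    have "(f has_vector_derivative D 1 t) (at t within {a..b})"
      using has_vector_derivative_transform[OF t _ D[rule_format, of t 0]] D0 t by simp
    then show ?thesis
      using vector_derivative_unique_within_closed_interval[of a b t f "f' t" "D 1 t"] assms(1) t der
      by simp
  qed
  moreover have "continuous_on {a..b} (D 1)"
    using D[rule_format, of _ 1] by (intro continuous_on_vector_derivative) (simp add: numeral_2_eq_2)
  ultimately show ?thesis
    unfolding C1_on_def using der continuous_on_cong by metis
qed

lemma C2_on_const: "C2_on S (\<lambda>s. c) (\<lambda>s. 0) (\<lambda>s. 0)"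
  unfolding C2_on_def by simp

lemma has_vector_derivative_scaleR_const:
  "((\<lambda>s. s *\<^sub>R v) has_vector_derivative v) (at t within S)"
  using has_vector_derivative_scaleR[OF DERIV_ident has_vector_derivative_const] by simp

lemma C2_on_scaleR_const: "C2_on S (\<lambda>s. s *\<^sub>R v) (\<lambda>s. v) (\<lambda>s. 0)"
  unfolding C2_on_def by (simp add: has_vector_derivative_scaleR_const)

lemma smooth_on_const: "smooth_on S (\<lambda>s. c)"
  unfolding smooth_on_def by (intro exI[of _ "\<lambda>k s. if k = 0 then c else 0"]) auto

lemma smooth_on_scaleR_const: "smooth_on S (\<lambda>s. s *\<^sub>R v)"
  unfolding smooth_on_def
  by (intro exI[of _ "\<lambda>k s. if k = 0 then s *\<^sub>R v else if k = 1 then v else 0"])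
     (auto simp: has_vector_derivative_scaleR_const)

lemma loc_unif_conv_vec_iff:
  fixes F :: "real \<Rightarrow> real \<Rightarrow> 'c::real_normed_vector ^ 'd"
  shows "loc_unif_conv a b F G \<longleftrightarrow> (\<forall>i. loc_unif_conv a b (\<lambda>h t. F h t $ i) (\<lambda>t. G t $ i))"
  unfolding loc_unif_conv_def
  by (auto intro: uniform_limit_vec_components bounded_linear.uniform_limit[OF bounded_linear_vec_nth])

lemma loc_unif_conv_const: "loc_unif_conv a b (\<lambda>h t. G t) G"
  unfolding loc_unif_conv_def by (simp add: uniform_limit_const)

lemma loc_unif_conv_add:
  fixes F :: "real \<Rightarrow> real \<Rightarrow> 'c::real_normed_vector"
  shows "loc_unif_conv a b F G \<Longrightarrow> loc_unif_conv a b F' G' \<Longrightarrow>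
    loc_unif_conv a b (\<lambda>h t. F h t + F' h t) (\<lambda>t. G t + G' t)"
  unfolding loc_unif_conv_def by (simp add: uniform_limit_add)

lemma loc_unif_conv_diff:
  fixes F :: "real \<Rightarrow> real \<Rightarrow> 'c::real_normed_vector"
  shows "loc_unif_conv a b F G \<Longrightarrow> loc_unif_conv a b F' G' \<Longrightarrow>
    loc_unif_conv a b (\<lambda>h t. F h t - F' h t) (\<lambda>t. G t - G' t)"
  unfolding loc_unif_conv_def by (simp add: uniform_limit_minus)

lemma loc_unif_conv_sum:
  fixes F :: "'i \<Rightarrow> real \<Rightarrow> real \<Rightarrow> 'c::real_normed_vector"
  shows "finite J \<Longrightarrow> (\<And>j. j \<in> J \<Longrightarrow> loc_unif_conv a b (F j) (G j)) \<Longrightarrow>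
    loc_unif_conv a b (\<lambda>h t. \<Sum>j\<in>J. F j h t) (\<lambda>t. \<Sum>j\<in>J. G j t)"
  unfolding loc_unif_conv_def by (simp add: uniform_limit_finite_sum)

lemma loc_unif_conv_mult_left:
  fixes g :: "real \<Rightarrow> 'c::real_normed_algebra"
  assumes "continuous_on {a..b} g" "continuous_on {a..b} G" "loc_unif_conv a b F G"
  shows "loc_unif_conv a b (\<lambda>h t. g t * F h t) (\<lambda>t. g t * G t)"
  unfolding loc_unif_conv_def
proof (intro allI impI)
  fix \<delta> :: real assume "\<delta> > 0"
  have bounded: "bounded (f ` {a + \<delta>..b - \<delta>})" if "continuous_on {a..b} f" for f :: "real \<Rightarrow> 'c"
    using compact_imp_bounded[OF compact_continuous_image[OF that compact_Icc]]
    by (rule bounded_subset) (use \<open>\<delta> > 0\<close> in auto)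
  show "uniform_limit {a + \<delta>..b - \<delta>} (\<lambda>h t. g t * F h t) (\<lambda>t. g t * G t) (at_right 0)"
    using assms \<open>\<delta> > 0\<close> unfolding loc_unif_conv_def
    by (intro uniform_lim_mult uniform_limit_const bounded) auto
qed

lemma cvec_nth [simp]: "cvec v $ i = complex_of_real (v $ i)"
  by (simp add: cvec_def)

lemma cmat_nth [simp]: "cmat M $ i $ j = complex_of_real (M $ i $ j)"
  by (simp add: cmat_def)

lemma boxpv_nth [simp]: "boxpv a b N \<gamma> \<epsilon> f t $ i = boxp a b N \<gamma> \<epsilon> (\<lambda>s. f s $ i) t"
  by (simp add: boxpv_def)

lemma boxmv_nth [simp]: "boxmv a b N \<gamma> \<epsilon> f t $ i = boxm a b N \<gamma> \<epsilon> (\<lambda>s. f s $ i) t"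
  by (simp add: boxmv_def)

lemma boxrsv_nth [simp]: "boxrsv a b r s \<epsilon> f t $ i = boxrs a b r s \<epsilon> (\<lambda>s. f s $ i) t"
  by (simp add: boxrsv_def)

lemma transpose_zero [simp]: "transpose (0 :: 'a::zero ^ 'n ^ 'm) = 0"
  by (simp add: transpose_def vec_eq_iff)

lemma C1_on_coordinate:
  "C1_on S x x' \<Longrightarrow> C1_on S (\<lambda>t. complex_of_real (x t $ j)) (\<lambda>t. complex_of_real (x' t $ j))"
  by (rule C1_on_bounded_linear[OF bounded_linear_compose[OF bounded_linear_of_real bounded_linear_vec_nth]])

lemma C1_on_entry:
  "C1_on S M M' \<Longrightarrow> C1_on S (\<lambda>t. complex_of_real (M t $ i $ j)) (\<lambda>t. complex_of_real (M' t $ i $ j))"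
  by (rule C1_on_bounded_linear[OF bounded_linear_compose[OF bounded_linear_of_real
      bounded_linear_compose[OF bounded_linear_vec_nth bounded_linear_vec_nth]]])

lemma boxm_sum: "boxm a b N \<gamma> \<epsilon> (\<lambda>s. \<Sum>j\<in>J. g j s) t = (\<Sum>j\<in>J. boxm a b N \<gamma> \<epsilon> (g j) t)"
  unfolding boxm_def by (simp add: sum_distrib_left sum_distrib_right sum.swap[of _ J])

lemma Theta_component:
  "Theta a b N \<gamma> h P Q R J1 J2 x t $ i =
     (\<Sum>j\<in>UNIV. boxm a b N \<gamma> h (\<lambda>s. complex_of_real (P s $ i $ j)
                                   * boxp a b N \<gamma> h (\<lambda>u. complex_of_real (x u $ j)) s) t)
   - (\<Sum>j\<in>UNIV. boxm a b N \<gamma> h (\<lambda>s. complex_of_real (R s $ i $ j) * complex_of_real (x s $ j)) t)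
   + (\<Sum>j\<in>UNIV. complex_of_real (R t $ i $ j) * boxp a b N \<gamma> h (\<lambda>u. complex_of_real (x u $ j)) t)
   + (\<Sum>j\<in>UNIV. complex_of_real (Q t $ i $ j) * complex_of_real (x t $ j))
   + boxm a b N \<gamma> h (\<lambda>u. complex_of_real (J1 u $ i)) t + complex_of_real (J2 t $ i)"
  by (simp add: Theta_def matrix_vector_mult_def boxm_sum)

(* The i-th component of the continuous Euler--Lagrange expression, in matching form. *)
lemma Euler_Lagrange_component:
  "cvec (- (P t *v x'' t) + (- P' t + 2 *\<^sub>R R t) *v x' t + (R' t + Q t) *v x t - J1' t + J2 t) $ i =
     (\<Sum>j\<in>UNIV. - (complex_of_real (P' t $ i $ j) * complex_of_real (x' t $ j)
                  + complex_of_real (P t $ i $ j) * complex_of_real (x'' t $ j)))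
   - (\<Sum>j\<in>UNIV. - (complex_of_real (R' t $ i $ j) * complex_of_real (x t $ j)
                  + complex_of_real (R t $ i $ j) * complex_of_real (x' t $ j)))
   + (\<Sum>j\<in>UNIV. complex_of_real (R t $ i $ j) * complex_of_real (x' t $ j))
   + (\<Sum>j\<in>UNIV. complex_of_real (Q t $ i $ j) * complex_of_real (x t $ j))
   + - complex_of_real (J1' t $ i) + complex_of_real (J2 t $ i)"
  by (simp add: matrix_vector_mult_def sum_negf[symmetric] sum.distrib[symmetric]
      sum_subtractf[symmetric] algebra_simps)

lemma Theta_source_component:
  "Theta a b N \<gamma> h (\<lambda>s. 0) (\<lambda>s. 0) (\<lambda>s. 0) J1 (\<lambda>s. 0) (\<lambda>s. 0) t $ i
     = boxm a b N \<gamma> h (\<lambda>u. complex_of_real (J1 u $ i)) t"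
  by (simp add: Theta_component boxm_def)

lemma chi_eq_one:
  assumes "0 \<le> h" "a + \<bar>of_int l\<bar> * h \<le> s" "s \<le> b - \<bar>of_int l\<bar> * h"
  shows "chi a b h l s = 1"
proof -
  have "of_int l * h \<le> \<bar>of_int l\<bar> * h" "- (of_int l * h) \<le> \<bar>of_int l\<bar> * h" "0 \<le> \<bar>of_int l\<bar> * h"
    using assms(1) mult_right_mono[of "- of_int l" "\<bar>of_int l\<bar>" h] by (auto intro: mult_right_mono)
  then show ?thesis using assms unfolding chi_def by auto
qed

lemma boxrs_interior:
  assumes "\<epsilon> > 0" "a + \<epsilon> \<le> u" "u \<le> b - \<epsilon>"
  shows "boxrs a b r s \<epsilon> y u = (- s * y (u - \<epsilon>) + (s - r) * y u + r * y (u + \<epsilon>)) / of_real \<epsilon>"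
proof -
  have "chi a b \<epsilon> 1 u = 1" "chi a b \<epsilon> (- 1) u = 1"
    using assms by (auto intro!: chi_eq_one)
  then show ?thesis
    using assms unfolding boxrs_def by (simp add: field_simps)
qed

(* Discrete algebra behind (f).  The ramp convolution kappa m = sum_i max (m - i) 0 * c i is a
   second antidifference of c: its second difference is c. *)
definition ramp_conv :: "nat \<Rightarrow> (int \<Rightarrow> complex) \<Rightarrow> int \<Rightarrow> complex" where
  "ramp_conv M c m = (\<Sum>i\<in>{- int M..int M}. of_int (max (m - i) 0) * c i)"

lemma ramp_second_difference:
  "(of_int (max (n + 1) 0) - 2 * of_int (max n 0) + of_int (max (n - 1) 0) :: complex) = (if n = 0 then 1 else 0)"
  by (cases "n > 0"; cases "n = 0") (auto simp: max_def)

lemma ramp_conv_second_difference: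
  "ramp_conv M c (m + 1) - 2 * ramp_conv M c m + ramp_conv M c (m - 1)
     = (if m \<in> {- int M..int M} then c m else 0)"
proof -
  have "ramp_conv M c (m + 1) - 2 * ramp_conv M c m + ramp_conv M c (m - 1)
      = (\<Sum>i\<in>{- int M..int M}. (of_int (max ((m - i) + 1) 0) - 2 * of_int (max (m - i) 0)
                                  + of_int (max ((m - i) - 1) 0)) * c i)"
    unfolding ramp_conv_def by (simp add: sum_subtractf sum.distrib sum_distrib_left algebra_simps)
  also have "\<dots> = (\<Sum>i\<in>{- int M..int M}. if m = i then c i else 0)"
    by (intro sum.cong refl) (simp only: ramp_second_difference, simp)
  finally show ?thesis by (simp add: sum.delta)
qed

lemma ramp_conv_support:
  assumes "(\<Sum>i\<in>{- int M..int M}. c i) = 0" and "(\<Sum>i\<in>{- int M..int M}. of_int i * c i) = 0"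
    and "m \<notin> {- (int M - 1)..int M - 1}"
  shows "ramp_conv M c m = 0"
proof (cases "m \<ge> int M")
  case True
  then have "ramp_conv M c m = (\<Sum>i\<in>{- int M..int M}. of_int m * c i - of_int i * c i)"
    unfolding ramp_conv_def by (intro sum.cong refl) (auto simp: algebra_simps)
  also have "\<dots> = of_int m * (\<Sum>i\<in>{- int M..int M}. c i) - (\<Sum>i\<in>{- int M..int M}. of_int i * c i)"
    by (simp add: sum_subtractf sum_distrib_left)
  finally show ?thesis using assms(1,2) by simp
next
  case False
  then have "m \<le> - int M" using assms(3) by auto
  then show ?thesis unfolding ramp_conv_def by (intro sum.neutral) auto
qed

lemma sum_shift_supported:
  fixes f :: "int \<Rightarrow> 'a::comm_monoid_add"
  assumes zero: "\<And>j. j \<notin> {- S..S} \<Longrightarrow> f j = 0" and "S + \<bar>c\<bar> \<le> K"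
  shows "(\<Sum>j\<in>{- K..K}. f (j + c)) = (\<Sum>j\<in>{- K..K}. f j)"
proof -
  have "(\<Sum>j\<in>{- K..K}. f (j + c)) = (\<Sum>j\<in>{- K + c..K + c}. f j)"
    by (rule sum.reindex_bij_witness[of _ "\<lambda>j. j - c" "\<lambda>j. j + c"]) auto
  also have "\<dots> = (\<Sum>j\<in>{- S..S}. f j)"
    using assms by (intro sum.mono_neutral_cong_right) auto
  also have "\<dots> = (\<Sum>j\<in>{- K..K}. f j)"
    using assms by (intro sum.mono_neutral_cong_left) auto
  finally show ?thesis .
qed

lemma summation_by_parts_twice:
  assumes c0: "(\<Sum>i\<in>{- int M..int M}. c i) = 0" and c1: "(\<Sum>i\<in>{- int M..int M}. of_int i * c i) = 0"
  shows "(\<Sum>i\<in>{- int M..int M}. c i * Y i)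
       = (\<Sum>m\<in>{- (int M - 1)..int M - 1}. ramp_conv M c m * (Y (m - 1) - 2 * Y m + Y (m + 1)))"
proof -
  define K where "K = int M + 1"
  let ?\<kappa> = "ramp_conv M c"
  have supp: "?\<kappa> m = 0" if "m \<notin> {- (int M - 1)..int M - 1}" for m
    using ramp_conv_support[OF c0 c1 that] .
  have "(\<Sum>m\<in>{- (int M - 1)..int M - 1}. ?\<kappa> m * (Y (m - 1) - 2 * Y m + Y (m + 1)))
      = (\<Sum>m\<in>{- K..K}. ?\<kappa> m * (Y (m - 1) - 2 * Y m + Y (m + 1)))"
    using supp by (intro sum.mono_neutral_left) (auto simp: K_def)
  also have "\<dots> = (\<Sum>m\<in>{- K..K}. ?\<kappa> m * Y (m - 1)) - 2 * (\<Sum>m\<in>{- K..K}. ?\<kappa> m * Y m)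
                   + (\<Sum>m\<in>{- K..K}. ?\<kappa> m * Y (m + 1))"
    by (simp add: algebra_simps sum.distrib sum_subtractf sum_distrib_left)
  also have "(\<Sum>m\<in>{- K..K}. ?\<kappa> m * Y (m - 1)) = (\<Sum>m\<in>{- K..K}. ?\<kappa> (m + 1) * Y m)"
    using sum_shift_supported[where f="\<lambda>m. ?\<kappa> m * Y (m - 1)" and S="int M - 1" and c=1 and K=K] supp
    by (simp add: K_def)
  also have "(\<Sum>m\<in>{- K..K}. ?\<kappa> m * Y (m + 1)) = (\<Sum>m\<in>{- K..K}. ?\<kappa> (m - 1) * Y m)"
    using sum_shift_supported[where f="\<lambda>m. ?\<kappa> m * Y (m + 1)" and S="int M - 1" and c="- 1" and K=K] supp
    by (simp add: K_def)
  also have "(\<Sum>m\<in>{- K..K}. ?\<kappa> (m + 1) * Y m) - 2 * (\<Sum>m\<in>{- K..K}. ?\<kappa> m * Y m)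
               + (\<Sum>m\<in>{- K..K}. ?\<kappa> (m - 1) * Y m)
      = (\<Sum>m\<in>{- K..K}. (?\<kappa> (m + 1) - 2 * ?\<kappa> m + ?\<kappa> (m - 1)) * Y m)"
    by (simp add: algebra_simps sum.distrib sum_subtractf sum_distrib_left)
  also have "\<dots> = (\<Sum>m\<in>{- K..K}. if m \<in> {- int M..int M} then c m * Y m else 0)"
    by (intro sum.cong refl) (simp add: ramp_conv_second_difference)
  also have "\<dots> = (\<Sum>m\<in>{- int M..int M}. c m * Y m)"
    by (simp add: sum.inter_filter[symmetric] K_def) (intro sum.cong refl, auto)
  finally show ?thesis ..
qed

locale stencil =
  fixes a b :: real and N :: nat and \<gamma> :: "int \<Rightarrow> complex"
  assumes a_less_b: "a < b" and N_pos: "1 \<le> N"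

begin

abbreviation nodes :: "int set" where
  "nodes \<equiv> {- int N..int N}"

definition diff_quot :: "real \<Rightarrow> (real \<Rightarrow> complex) \<Rightarrow> real \<Rightarrow> complex" where
  "diff_quot h f s = (\<Sum>l\<in>nodes. \<gamma> l / of_real h * f (s + of_int l * h))"

definition abs_moment :: real where
  "abs_moment = (\<Sum>l\<in>nodes. norm (\<gamma> l) * \<bar>of_int l\<bar>)"

definition stencil_interval :: "real \<Rightarrow> real \<Rightarrow> real set" where
  "stencil_interval h s = {s - real N * \<bar>h\<bar>..s + real N * \<bar>h\<bar>}"

lemma abs_moment_nonneg: "abs_moment \<ge> 0"
  unfolding abs_moment_def by (intro sum_nonneg) auto

lemma stencil_interval_subset_iff:
  "stencil_interval h s \<subseteq> {c..d} \<longleftrightarrow> c \<le> s - real N * \<bar>h\<bar> \<and> s + real N * \<bar>h\<bar> \<le> d"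
  unfolding stencil_interval_def by (subst atLeastatMost_subset_iff) auto

lemma node_in_stencil_interval:
  assumes "l \<in> nodes"
  shows "s + of_int l * h \<in> stencil_interval h s"
proof -
  have "\<bar>of_int l * h\<bar> \<le> real N * \<bar>h\<bar>"
    using assms by (auto simp: abs_mult intro!: mult_right_mono)
  then show ?thesis by (auto simp: stencil_interval_def abs_le_iff)
qed

lemma centre_in_stencil_interval: "s \<in> stencil_interval h s"
  by (simp add: stencil_interval_def)

lemma stencil_interval_uminus [simp]: "stencil_interval (- h) s = stencil_interval h s"
  by (simp add: stencil_interval_def)

lemma stencil_interval_mono:
  assumes "\<bar>k\<bar> \<le> \<bar>h\<bar>"
  shows "stencil_interval k s \<subseteq> stencil_interval h s"
  using mult_left_mono[OF assms, of "real N"] by (auto simp: stencil_interval_def)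

lemma stencil_interval_nested:
  assumes "w \<in> stencil_interval h t"
  shows "stencil_interval h w \<subseteq> stencil_interval (2 * h) t"
  using assms by (auto simp: stencil_interval_def)

(* Interior formulas: if the stencil lies in [a,b], no characteristic function vanishes. *)
lemma boxp_eq_diff_quot:
  assumes "0 < h" "stencil_interval h s \<subseteq> {a..b}"
  shows "boxp a b N \<gamma> h f s = diff_quot h f s"
  unfolding boxp_def diff_quot_def
proof (intro sum.cong refl)
  fix l assume "l \<in> nodes"
  then have "\<bar>of_int (- l)\<bar> * h \<le> real N * h" using assms(1) by (auto intro!: mult_right_mono)
  moreover have "a \<le> s - real N * h" "s + real N * h \<le> b"
    using assms by (auto simp: stencil_interval_subset_iff)
  ultimately have "chi a b h (- l) s = 1"
    using assms(1) by (intro chi_eq_one) linarith+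
  then show "\<gamma> l / of_real h * f (s + of_int l * h) * chi a b h (- l) s = \<gamma> l / of_real h * f (s + of_int l * h)"
    by simp
qed

lemma boxm_eq_diff_quot:
  assumes "0 < h" "stencil_interval h s \<subseteq> {a..b}"
  shows "boxm a b N \<gamma> h f s = - diff_quot (- h) f s"
proof -
  have "boxm a b N \<gamma> h f s = (\<Sum>l\<in>nodes. \<gamma> l / of_real h * f (s - of_int l * h))"
    unfolding boxm_def
  proof (intro sum.cong refl)
    fix l assume "l \<in> nodes"
    then have "\<bar>of_int l\<bar> * h \<le> real N * h" using assms(1) by (auto intro!: mult_right_mono)
    moreover have "a \<le> s - real N * h" "s + real N * h \<le> b"
      using assms by (auto simp: stencil_interval_subset_iff)
    ultimately have "chi a b h l s = 1"
      using assms(1) by (intro chi_eq_one) linarith+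
    then show "\<gamma> l / of_real h * f (s - of_int l * h) * chi a b h l s = \<gamma> l / of_real h * f (s - of_int l * h)"
      by simp
  qed
  then show ?thesis
    unfolding diff_quot_def by (simp add: sum_negf[symmetric])
qed

lemma diff_quot_cong:
  "(\<And>l. l \<in> nodes \<Longrightarrow> f (s + of_int l * h) = g (s + of_int l * h)) \<Longrightarrow> diff_quot h f s = diff_quot h g s"
  unfolding diff_quot_def by simp

lemma diff_quot_add: "diff_quot h (\<lambda>u. f u + g u) s = diff_quot h f s + diff_quot h g s"
  unfolding diff_quot_def by (simp add: distrib_left sum.distrib)

lemma diff_quot_diff: "diff_quot h (\<lambda>u. f u - g u) s = diff_quot h f s - diff_quot h g s"
  unfolding diff_quot_def by (simp add: right_diff_distrib sum_subtractf)

lemma diff_quot_mult_const: "diff_quot h (\<lambda>u. f u * c) s = diff_quot h f s * c"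
  unfolding diff_quot_def by (simp add: sum_distrib_right mult.assoc)

lemma diff_quot_const: "diff_quot h (\<lambda>u. c) s = (\<Sum>l\<in>nodes. \<gamma> l) * c / of_real h"
  unfolding diff_quot_def by (simp add: sum_distrib_right sum_divide_distrib)

lemma diff_quot_of_real:
  assumes "h \<noteq> 0"
  shows "diff_quot h of_real s = (\<Sum>l\<in>nodes. \<gamma> l) * of_real s / of_real h + (\<Sum>l\<in>nodes. of_int l * \<gamma> l)"
proof -
  have "diff_quot h of_real s = (\<Sum>l\<in>nodes. \<gamma> l * of_real s / of_real h + of_int l * \<gamma> l)"
    unfolding diff_quot_def using assms by (intro sum.cong refl) (simp add: field_simps)
  then show ?thesis by (simp add: sum.distrib sum_distrib_right sum_divide_distrib)
qed

lemma diff_quot_bound: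
  assumes sum0: "(\<Sum>l\<in>nodes. \<gamma> l) = 0" and "h \<noteq> 0"
    and lip: "\<And>l. l \<in> nodes \<Longrightarrow> norm (g (s + of_int l * h) - g s) \<le> L * \<bar>of_int l * h\<bar>"
  shows "norm (diff_quot h g s) \<le> L * abs_moment"
proof -
  have "diff_quot h g s = diff_quot h (\<lambda>u. g u - g s) s"
    using sum0 by (simp add: diff_quot_diff diff_quot_const)
  also have "norm \<dots> \<le> (\<Sum>l\<in>nodes. norm (\<gamma> l / of_real h * (g (s + of_int l * h) - g s)))"
    unfolding diff_quot_def by (rule norm_sum)
  also have "\<dots> \<le> (\<Sum>l\<in>nodes. L * (norm (\<gamma> l) * \<bar>of_int l\<bar>))"
  proof (rule sum_mono)
    fix l assume "l \<in> nodes"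
    have "norm (\<gamma> l / of_real h * (g (s + of_int l * h) - g s))
        = norm (\<gamma> l) / \<bar>h\<bar> * norm (g (s + of_int l * h) - g s)"
      by (simp add: norm_mult norm_divide)
    also have "\<dots> \<le> norm (\<gamma> l) / \<bar>h\<bar> * (L * \<bar>of_int l * h\<bar>)"
      by (intro mult_left_mono lip \<open>l \<in> nodes\<close>) simp
    also have "\<dots> = L * (norm (\<gamma> l) * \<bar>of_int l\<bar>)"
      using \<open>h \<noteq> 0\<close> by (simp add: abs_mult)
    finally show "norm (\<gamma> l / of_real h * (g (s + of_int l * h) - g s)) \<le> L * (norm (\<gamma> l) * \<bar>of_int l\<bar>)" .
  qed
  also have "\<dots> = L * abs_moment"
    by (simp add: abs_moment_def sum_distrib_left)
  finally show ?thesis .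
qed

lemma diff_quot_bound_deriv:
  assumes "(\<Sum>l\<in>nodes. \<gamma> l) = 0" and "h \<noteq> 0"
    and der: "\<And>u. u \<in> stencil_interval h s \<Longrightarrow> (g has_vector_derivative g' u) (at u within stencil_interval h s)"
    and bound: "\<And>u. u \<in> stencil_interval h s \<Longrightarrow> norm (g' u) \<le> L"
  shows "norm (diff_quot h g s) \<le> L * abs_moment"
proof (rule diff_quot_bound[OF assms(1,2)])
  fix l assume "l \<in> nodes"
  have "norm (g (s + of_int l * h) - g s) \<le> L * \<bar>s + of_int l * h - s\<bar>"
    using der bound node_in_stencil_interval[OF \<open>l \<in> nodes\<close>] centre_in_stencil_interval
    unfolding stencil_interval_def by (intro norm_diff_le_deriv_bound)
  then show "norm (g (s + of_int l * h) - g s) \<le> L * \<bar>of_int l * h\<bar>" by simp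
qed

lemma has_vector_derivative_diff_quot:
  assumes der: "\<And>t. t \<in> {a..b} \<Longrightarrow> (x has_vector_derivative x' t) (at t within {a..b})"
    and T: "\<And>w. w \<in> T \<Longrightarrow> stencil_interval h w \<subseteq> {a..b}" and "v \<in> T"
  shows "(diff_quot h x has_vector_derivative diff_quot h x' v) (at v within T)"
proof -
  have shifted: "((\<lambda>w. x (w + c)) has_vector_derivative x' (v + c)) (at v within T)"
    if c: "\<And>w. w \<in> T \<Longrightarrow> w + c \<in> {a..b}" for c
  proof -
    have "(x has_vector_derivative x' (v + c)) (at (v + c) within (\<lambda>w. w + c) ` T)"
      using der[of "v + c"] c \<open>v \<in> T\<close> by (auto intro: has_vector_derivative_within_subset)
    moreover have "((\<lambda>w. w + c) has_vector_derivative 1) (at v within T)"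
      by (auto intro!: derivative_eq_intros)
    ultimately show ?thesis
      using vector_diff_chain_within by (fastforce simp: o_def)
  qed
  have "((\<lambda>w. \<Sum>l\<in>nodes. \<gamma> l / of_real h * x (w + of_int l * h)) has_vector_derivative
        (\<Sum>l\<in>nodes. \<gamma> l / of_real h * x' (v + of_int l * h))) (at v within T)"
    using T node_in_stencil_interval
    by (intro has_vector_derivative_sum has_vector_derivative_mult_right shifted) blast
  then show ?thesis by (simp add: diff_quot_def[abs_def])
qed

lemma boxm_mult_boxp_expand:
  assumes "0 < h" and W: "stencil_interval (2 * h) t \<subseteq> {a..b}"
  shows "boxm a b N \<gamma> h (\<lambda>s. p s * boxp a b N \<gamma> h x s) t
    = - (diff_quot (- h) (\<lambda>s. p s * x' s) t + diff_quot (- h) (\<lambda>s. p s * (diff_quot h x s - x' s)) t)"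
proof -
  have inner: "stencil_interval h t \<subseteq> {a..b}"
    using W stencil_interval_mono[of h "2 * h" t] \<open>0 < h\<close> by auto
  have "boxm a b N \<gamma> h (\<lambda>s. p s * boxp a b N \<gamma> h x s) t
      = - diff_quot (- h) (\<lambda>s. p s * boxp a b N \<gamma> h x s) t"
    by (rule boxm_eq_diff_quot[OF \<open>0 < h\<close> inner])
  also have "diff_quot (- h) (\<lambda>s. p s * boxp a b N \<gamma> h x s) t
      = diff_quot (- h) (\<lambda>s. p s * x' s + p s * (diff_quot h x s - x' s)) t"
  proof (rule diff_quot_cong)
    fix l assume "l \<in> nodes"
    then have "t + of_int l * - h \<in> stencil_interval h t"
      using node_in_stencil_interval[of l t "- h"] by simp
    then have "stencil_interval h (t + of_int l * - h) \<subseteq> {a..b}"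
      using stencil_interval_nested W by blast
    then show "p (t + of_int l * - h) * boxp a b N \<gamma> h x (t + of_int l * - h)
        = p (t + of_int l * - h) * x' (t + of_int l * - h)
          + p (t + of_int l * - h) * (diff_quot h x (t + of_int l * - h) - x' (t + of_int l * - h))"
      using \<open>0 < h\<close> by (simp add: boxp_eq_diff_quot algebra_simps)
  qed
  finally show ?thesis by (simp add: diff_quot_add)
qed

lemma loc_unif_convI:
  assumes "\<And>e. e > 0 \<Longrightarrow> \<exists>d>0. \<forall>h t. 0 < h \<longrightarrow> h < d \<longrightarrow> stencil_interval (2 * h) t \<subseteq> {a..b} \<longrightarrow>
             dist (F h t) (G t) \<le> e"
  shows "loc_unif_conv a b F G"
  unfolding loc_unif_conv_def
proof (intro allI impI uniform_limit_at_rightI)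
  fix \<delta> e :: real assume "\<delta> > 0" "e > 0"
  obtain d where "d > 0" and close: "\<forall>h t. 0 < h \<longrightarrow> h < d \<longrightarrow> stencil_interval (2 * h) t \<subseteq> {a..b} \<longrightarrow>
             dist (F h t) (G t) \<le> e"
    using assms[OF \<open>e > 0\<close>] by blast
  have N: "real N > 0" using N_pos by simp
  show "\<exists>d>0. \<forall>h t. 0 < h \<longrightarrow> h < d \<longrightarrow> t \<in> {a + \<delta>..b - \<delta>} \<longrightarrow> dist (F h t) (G t) \<le> e"
  proof (intro exI[of _ "min d (\<delta> / (2 * real N))"] conjI allI impI)
    show "min d (\<delta> / (2 * real N)) > 0" using \<open>d > 0\<close> \<open>\<delta> > 0\<close> N by simp
    fix h t assume h: "0 < h" "h < min d (\<delta> / (2 * real N))" and t: "t \<in> {a + \<delta>..b - \<delta>}"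
    then have "real N * \<bar>2 * h\<bar> \<le> \<delta>" using N by (simp add: field_simps)
    then have "stencil_interval (2 * h) t \<subseteq> {a..b}" using t by (simp add: stencil_interval_subset_iff)
    then show "dist (F h t) (G t) \<le> e" using close h by simp
  qed
qed

(* Necessity: everything is decided at the midpoint of [a,b]. *)
lemma eventually_stencil_at_midpoint:
  "eventually (\<lambda>h. 0 < h \<and> stencil_interval h ((a + b) / 2) \<subseteq> {a..b}) (at_right 0)"
  unfolding eventually_at_right_field stencil_interval_subset_iff
  using a_less_b N_pos by (intro exI[of _ "(b - a) / (2 * real N)"]) (auto simp: field_simps)

lemma loc_unif_conv_midpoint:
  assumes "loc_unif_conv a b F G"
  shows "((\<lambda>h. F h ((a + b) / 2)) \<longlongrightarrow> G ((a + b) / 2)) (at_right 0)"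
proof -
  have "uniform_limit {a + (b - a) / 4..b - (b - a) / 4} F G (at_right 0)"
    using assms a_less_b unfolding loc_unif_conv_def by auto
  then have "uniform_limit {(a + b) / 2} F G (at_right 0)"
    by (rule uniform_limit_on_subset) (use a_less_b in \<open>auto simp: field_simps\<close>)
  then show ?thesis by simp
qed

lemma consistent_of_forward_limits:
  assumes "loc_unif_conv a b (\<lambda>h t. boxp a b N \<gamma> h (\<lambda>s. 1) t) (\<lambda>t. 0)"
    and "loc_unif_conv a b (\<lambda>h t. boxp a b N \<gamma> h (\<lambda>s. complex_of_real s) t) (\<lambda>t. 1)"
  shows "(\<Sum>l\<in>nodes. \<gamma> l) = 0 \<and> (\<Sum>l\<in>nodes. of_int l * \<gamma> l) = 1"
proof (rule moments_from_limits[OF loc_unif_conv_midpoint[OF assms(1)] loc_unif_conv_midpoint[OF assms(2)]])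
  show "\<forall>\<^sub>F h in at_right 0.
      boxp a b N \<gamma> h (\<lambda>s. 1) ((a + b) / 2) = (\<Sum>l\<in>nodes. \<gamma> l) / of_real h \<and>
      boxp a b N \<gamma> h of_real ((a + b) / 2) = (\<Sum>l\<in>nodes. \<gamma> l) * of_real ((a + b) / 2) / of_real h
        + (\<Sum>l\<in>nodes. of_int l * \<gamma> l)"
    using eventually_stencil_at_midpoint
    by eventually_elim (simp add: boxp_eq_diff_quot diff_quot_const diff_quot_of_real)
qed

lemma consistent_of_backward_limits:
  assumes "loc_unif_conv a b (\<lambda>h t. boxm a b N \<gamma> h (\<lambda>s. 1) t) (\<lambda>t. 0)"
    and "loc_unif_conv a b (\<lambda>h t. boxm a b N \<gamma> h (\<lambda>s. complex_of_real s) t) (\<lambda>t. - 1)"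
  shows "(\<Sum>l\<in>nodes. \<gamma> l) = 0 \<and> (\<Sum>l\<in>nodes. of_int l * \<gamma> l) = 1"
proof -
  have "(\<Sum>l\<in>nodes. \<gamma> l) = 0 \<and> - (\<Sum>l\<in>nodes. of_int l * \<gamma> l) = - 1"
  proof (rule moments_from_limits[OF loc_unif_conv_midpoint[OF assms(1)] loc_unif_conv_midpoint[OF assms(2)]])
    show "\<forall>\<^sub>F h in at_right 0.
        boxm a b N \<gamma> h (\<lambda>s. 1) ((a + b) / 2) = (\<Sum>l\<in>nodes. \<gamma> l) / of_real h \<and>
        boxm a b N \<gamma> h of_real ((a + b) / 2) = (\<Sum>l\<in>nodes. \<gamma> l) * of_real ((a + b) / 2) / of_real h
          + - (\<Sum>l\<in>nodes. of_int l * \<gamma> l)"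
      using eventually_stencil_at_midpoint
      by eventually_elim (simp add: boxm_eq_diff_quot diff_quot_const diff_quot_of_real)
  qed
  then show ?thesis by simp
qed

lemma consistent_of_boxpv_limits:
  assumes "\<And>(x :: real \<Rightarrow> real ^ 'd) x' x''. C2_on {a..b} x x' x'' \<Longrightarrow>
             loc_unif_conv a b (\<lambda>\<epsilon> t. boxpv a b N \<gamma> \<epsilon> (\<lambda>s. cvec (x s)) t) (\<lambda>t. cvec (x' t))"
  shows "(\<Sum>l\<in>nodes. \<gamma> l) = 0 \<and> (\<Sum>l\<in>nodes. of_int l * \<gamma> l) = 1"
proof (rule consistent_of_forward_limits)
  show "loc_unif_conv a b (\<lambda>h t. boxp a b N \<gamma> h (\<lambda>s. 1) t) (\<lambda>t. 0)"
    using assms[OF C2_on_const[of _ "1 :: real ^ 'd"]] unfolding loc_unif_conv_vec_iff by simp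
  show "loc_unif_conv a b (\<lambda>h t. boxp a b N \<gamma> h (\<lambda>s. complex_of_real s) t) (\<lambda>t. 1)"
    using assms[OF C2_on_scaleR_const[of _ "1 :: real ^ 'd"]] unfolding loc_unif_conv_vec_iff by simp
qed

lemma consistent_of_boxmv_limits:
  assumes "\<And>(x :: real \<Rightarrow> real ^ 'd) x' x''. C2_on {a..b} x x' x'' \<Longrightarrow>
             loc_unif_conv a b (\<lambda>\<epsilon> t. boxmv a b N \<gamma> \<epsilon> (\<lambda>s. cvec (x s)) t) (\<lambda>t. - cvec (x' t))"
  shows "(\<Sum>l\<in>nodes. \<gamma> l) = 0 \<and> (\<Sum>l\<in>nodes. of_int l * \<gamma> l) = 1"
proof (rule consistent_of_backward_limits)
  show "loc_unif_conv a b (\<lambda>h t. boxm a b N \<gamma> h (\<lambda>s. 1) t) (\<lambda>t. 0)"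
    using assms[OF C2_on_const[of _ "1 :: real ^ 'd"]] unfolding loc_unif_conv_vec_iff by simp
  show "loc_unif_conv a b (\<lambda>h t. boxm a b N \<gamma> h (\<lambda>s. complex_of_real s) t) (\<lambda>t. - 1)"
    using assms[OF C2_on_scaleR_const[of _ "1 :: real ^ 'd"]] unfolding loc_unif_conv_vec_iff by simp
qed

(* (a) implies (e): switch off everything but the source J1, which is then a constant or linear test function. *)
lemma consistent_of_source_limits:
  assumes "\<And>(J1 :: real \<Rightarrow> real ^ 'd) J1'. smooth_on {a..b} J1 \<Longrightarrow>
             (\<forall>t\<in>{a..b}. (J1 has_vector_derivative J1' t) (at t within {a..b})) \<Longrightarrow>
             loc_unif_conv a b (\<lambda>\<epsilon> t. Theta a b N \<gamma> \<epsilon> (\<lambda>s. 0) (\<lambda>s. 0) (\<lambda>s. 0) J1 (\<lambda>s. 0) (\<lambda>s. 0) t)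
               (\<lambda>t. cvec (- J1' t))"
  shows "(\<Sum>l\<in>nodes. \<gamma> l) = 0 \<and> (\<Sum>l\<in>nodes. of_int l * \<gamma> l) = 1"
proof (rule consistent_of_backward_limits)
  show "loc_unif_conv a b (\<lambda>h t. boxm a b N \<gamma> h (\<lambda>s. 1) t) (\<lambda>t. 0)"
    using assms[OF smooth_on_const[of _ "1 :: real ^ 'd"], of "\<lambda>s. 0"]
    unfolding loc_unif_conv_vec_iff by (simp add: Theta_source_component)
  show "loc_unif_conv a b (\<lambda>h t. boxm a b N \<gamma> h (\<lambda>s. complex_of_real s) t) (\<lambda>t. - 1)"
    using assms[OF smooth_on_scaleR_const[of _ "1 :: real ^ 'd"], of "\<lambda>s. 1"]
    unfolding loc_unif_conv_vec_iff by (simp add: Theta_source_component has_vector_derivative_scaleR_const)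
qed

definition defect :: "int \<Rightarrow> complex" where
  "defect i = \<gamma> i - (if i = 1 then 1 else 0) + (if i = 0 then 1 else 0)"

lemma sum_defect_mult: "(\<Sum>i\<in>nodes. defect i * Y i) = (\<Sum>i\<in>nodes. \<gamma> i * Y i) - Y 1 + Y 0"
proof -
  have "0 \<in> nodes" "1 \<in> nodes" using N_pos by auto
  have "(\<Sum>i\<in>nodes. defect i * Y i)
      = (\<Sum>i\<in>nodes. \<gamma> i * Y i - (if i = 1 then Y 1 else 0) + (if i = 0 then Y 0 else 0))"
    by (intro sum.cong refl) (simp add: defect_def algebra_simps)
  also have "\<dots> = (\<Sum>i\<in>nodes. \<gamma> i * Y i) - Y 1 + Y 0"
    using \<open>0 \<in> nodes\<close> \<open>1 \<in> nodes\<close> by (simp add: sum.distrib sum_subtractf)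
  finally show ?thesis .
qed

lemma safety_node:
  assumes "\<epsilon> > 0" "t \<in> {a + 2 * real N * \<epsilon>..b - 2 * real N * \<epsilon>}" "l \<in> {- (int N - 1)..int N - 1}"
  shows "a + \<epsilon> \<le> t - of_int l * \<epsilon>" "t - of_int l * \<epsilon> \<le> b - \<epsilon>"
proof -
  have "\<bar>of_int l\<bar> \<le> real N - 1" using assms(3) N_pos by auto
  then have "\<bar>of_int l * \<epsilon>\<bar> \<le> (real N - 1) * \<epsilon>"
    using assms(1) by (simp add: abs_mult mult_right_mono)
  moreover have "(real N - 1) * \<epsilon> + \<epsilon> \<le> 2 * real N * \<epsilon>"
    using assms(1) N_pos by (simp add: algebra_simps)
  ultimately show "a + \<epsilon> \<le> t - of_int l * \<epsilon>" "t - of_int l * \<epsilon> \<le> b - \<epsilon>"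
    using assms(2) by (auto simp: abs_le_iff)
qed

lemma safety_interval_stencil:
  assumes "\<epsilon> > 0" "t \<in> {a + 2 * real N * \<epsilon>..b - 2 * real N * \<epsilon>}"
  shows "stencil_interval \<epsilon> t \<subseteq> {a..b}"
proof -
  have "0 \<le> real N * \<epsilon>" "2 * real N * \<epsilon> = 2 * (real N * \<epsilon>)" using assms(1) by simp_all
  then show ?thesis using assms(2) unfolding stencil_interval_subset_iff by auto
qed

(* (f) implies (e): evaluate the decomposition on constant and linear functions. *)
lemma consistent_of_decomposition:
  assumes decomp: "\<forall>\<epsilon>>0. \<forall>(x :: real \<Rightarrow> real ^ 'd). \<forall>t\<in>{a + 2 * real N * \<epsilon>..b - 2 * real N * \<epsilon>}.
      boxpv a b N \<gamma> \<epsilon> (\<lambda>s. cvec (x s)) t = boxrsv a b 1 0 \<epsilon> (\<lambda>s. cvec (x s)) t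
        + (\<Sum>l\<in>{- (int N - 1)..int N - 1}. k (l + int N) *s boxrsv a b 1 (-1) \<epsilon> (\<lambda>s. cvec (x s)) (t - of_int l * \<epsilon>))"
  shows "(\<Sum>l\<in>nodes. \<gamma> l) = 0 \<and> (\<Sum>l\<in>nodes. of_int l * \<gamma> l) = 1"
proof -
  define \<epsilon> where "\<epsilon> = (b - a) / (4 * real N)"
  define t where "t = (a + b) / 2"
  have "\<epsilon> > 0" using a_less_b N_pos by (simp add: \<epsilon>_def)
  have safe: "t \<in> {a + 2 * real N * \<epsilon>..b - 2 * real N * \<epsilon>}"
    using N_pos by (simp add: \<epsilon>_def t_def field_simps)
  have scalar: "boxp a b N \<gamma> \<epsilon> (\<lambda>s. of_real (y s)) t = boxrs a b 1 0 \<epsilon> (\<lambda>s. of_real (y s)) t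
      + (\<Sum>l\<in>{- (int N - 1)..int N - 1}. k (l + int N) * boxrs a b 1 (-1) \<epsilon> (\<lambda>s. of_real (y s)) (t - of_int l * \<epsilon>))"
    for y :: "real \<Rightarrow> real"
    using decomp[rule_format, OF \<open>\<epsilon> > 0\<close> safe, where x="\<lambda>s. y s *\<^sub>R 1"] by (simp add: vec_eq_iff)
  note node = safety_node[OF \<open>\<epsilon> > 0\<close> safe]
  have "a + \<epsilon> \<le> t" "t \<le> b - \<epsilon>" using node[of 0] N_pos by simp_all
  note boxrs = boxrs_interior[OF \<open>\<epsilon> > 0\<close>]
  have box: "boxp a b N \<gamma> \<epsilon> y t = diff_quot \<epsilon> y t" for y
    using \<open>\<epsilon> > 0\<close> safe by (intro boxp_eq_diff_quot safety_interval_stencil)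
  have const: "boxrs a b 1 (-1) \<epsilon> (\<lambda>s. 1) (t - of_int l * \<epsilon>) = 0"
    and linear: "boxrs a b 1 (-1) \<epsilon> of_real (t - of_int l * \<epsilon>) = 0"
    if "l \<in> {- (int N - 1)..int N - 1}" for l
    using boxrs[OF node[OF that]] by (simp_all add: algebra_simps)
  have "diff_quot \<epsilon> (\<lambda>s. 1) t = 0"
    using scalar[of "\<lambda>s. 1"] const
    by (simp add: box boxrs \<open>a + \<epsilon> \<le> t\<close> \<open>t \<le> b - \<epsilon>\<close>)
  then have sum0: "(\<Sum>l\<in>nodes. \<gamma> l) = 0"
    using \<open>\<epsilon> > 0\<close> by (simp add: diff_quot_const)
  have "diff_quot \<epsilon> of_real t = 1"
    using scalar[of "\<lambda>s. s"] linear \<open>\<epsilon> > 0\<close>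
    by (simp add: box boxrs \<open>a + \<epsilon> \<le> t\<close> \<open>t \<le> b - \<epsilon>\<close>)
  then show ?thesis
    using sum0 \<open>\<epsilon> > 0\<close> by (simp add: diff_quot_of_real)
qed

end

locale consistent_stencil = stencil +
  assumes sum_coeffs: "(\<Sum>l\<in>{- int N..int N}. \<gamma> l) = 0"
    and first_moment: "(\<Sum>l\<in>{- int N..int N}. of_int l * \<gamma> l) = 1"

begin

lemma diff_quot_linear: "h \<noteq> 0 \<Longrightarrow> diff_quot h (\<lambda>u. of_real u * w) s = w"
  using diff_quot_mult_const[of h of_real w s] by (simp add: diff_quot_of_real sum_coeffs first_moment)

(* Uniform first-order approximation: diff_quot h f s - f' s is the difference quotient of
   u |-> f u - u f'(s), whose derivative f' u - f' s is small on a short stencil. *)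
lemma diff_quot_approx:
  assumes f: "C1_on {a..b} f f'" and "e > 0"
  obtains d where "d > 0"
    and "\<And>h s. h \<noteq> 0 \<Longrightarrow> \<bar>h\<bar> < d \<Longrightarrow> stencil_interval h s \<subseteq> {a..b} \<Longrightarrow>
           norm (diff_quot h f s - f' s) \<le> e"
proof -
  define e' where "e' = e / (abs_moment + 1)"
  have "e' > 0" using \<open>e > 0\<close> abs_moment_nonneg by (simp add: e'_def)
  have "uniformly_continuous_on {a..b} f'"
    using C1_onD(2)[OF f] by (intro compact_uniformly_continuous) auto
  then obtain d0 where "d0 > 0"
    and uc: "\<And>u v. u \<in> {a..b} \<Longrightarrow> v \<in> {a..b} \<Longrightarrow> dist v u < d0 \<Longrightarrow> dist (f' v) (f' u) < e'"
    unfolding uniformly_continuous_on_def using \<open>e' > 0\<close> by metis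
  have N: "real N > 0" using N_pos by simp
  show ?thesis
  proof (rule that[of "d0 / real N"])
    show "d0 / real N > 0" using \<open>d0 > 0\<close> N by simp
    fix h s assume "h \<noteq> 0" "\<bar>h\<bar> < d0 / real N" and sub: "stencil_interval h s \<subseteq> {a..b}"
    have near: "dist u s < d0" if "u \<in> stencil_interval h s" for u
    proof -
      have "real N * \<bar>h\<bar> < d0" using \<open>\<bar>h\<bar> < d0 / real N\<close> N by (simp add: field_simps)
      then show ?thesis using that by (auto simp: stencil_interval_def dist_real_def)
    qed
    have "diff_quot h f s - f' s = diff_quot h (\<lambda>u. f u - of_real u * f' s) s"
      using \<open>h \<noteq> 0\<close> by (simp add: diff_quot_diff diff_quot_linear)
    also have "norm \<dots> \<le> e' * abs_moment"
    proof (rule diff_quot_bound_deriv[OF sum_coeffs \<open>h \<noteq> 0\<close>, where g'="\<lambda>u. f' u - f' s"])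
      fix u assume u: "u \<in> stencil_interval h s"
      have "(f has_vector_derivative f' u) (at u within stencil_interval h s)"
        using C1_onD(1)[OF f] u sub by (meson has_vector_derivative_within_subset subsetD)
      moreover have "((\<lambda>u. of_real u * f' s) has_vector_derivative f' s) (at u within stencil_interval h s)"
        using has_vector_derivative_scaleR_const[of "f' s"] by (simp add: scaleR_conv_of_real)
      ultimately show "((\<lambda>u. f u - of_real u * f' s) has_vector_derivative f' u - f' s)
          (at u within stencil_interval h s)"
        by (rule has_vector_derivative_diff)
      have "u \<in> {a..b}" "s \<in> {a..b}"
        using u sub centre_in_stencil_interval[of s h] by auto
      then have "dist (f' u) (f' s) < e'"
        using uc near[OF u] by blast
      then show "norm (f' u - f' s) \<le> e'" by (simp add: dist_norm)
    qed
    also have "\<dots> \<le> e"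
      using \<open>e > 0\<close> abs_moment_nonneg by (simp add: e'_def field_simps)
    finally show "norm (diff_quot h f s - f' s) \<le> e" .
  qed
qed

lemma boxp_conv:
  assumes "C1_on {a..b} f f'"
  shows "loc_unif_conv a b (\<lambda>h t. boxp a b N \<gamma> h f t) f'"
proof (rule loc_unif_convI)
  fix e :: real assume "e > 0"
  then obtain d where "d > 0" and approx: "\<And>h s. h \<noteq> 0 \<Longrightarrow> \<bar>h\<bar> < d \<Longrightarrow>
      stencil_interval h s \<subseteq> {a..b} \<Longrightarrow> norm (diff_quot h f s - f' s) \<le> e"
    using diff_quot_approx[OF assms] by blast
  show "\<exists>d>0. \<forall>h t. 0 < h \<longrightarrow> h < d \<longrightarrow> stencil_interval (2 * h) t \<subseteq> {a..b} \<longrightarrow>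
      dist (boxp a b N \<gamma> h f t) (f' t) \<le> e"
  proof (intro exI[of _ d] conjI allI impI)
    fix h t assume "0 < h" "h < d" "stencil_interval (2 * h) t \<subseteq> {a..b}"
    moreover have "stencil_interval h t \<subseteq> stencil_interval (2 * h) t"
      using \<open>0 < h\<close> by (intro stencil_interval_mono) simp
    ultimately show "dist (boxp a b N \<gamma> h f t) (f' t) \<le> e"
      using approx[of h t] by (simp add: boxp_eq_diff_quot dist_norm)
  qed (fact \<open>d > 0\<close>)
qed

lemma boxm_conv:
  assumes "C1_on {a..b} f f'"
  shows "loc_unif_conv a b (\<lambda>h t. boxm a b N \<gamma> h f t) (\<lambda>t. - f' t)"
proof (rule loc_unif_convI)
  fix e :: real assume "e > 0"
  then obtain d where "d > 0" and approx: "\<And>h s. h \<noteq> 0 \<Longrightarrow> \<bar>h\<bar> < d \<Longrightarrow>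
      stencil_interval h s \<subseteq> {a..b} \<Longrightarrow> norm (diff_quot h f s - f' s) \<le> e"
    using diff_quot_approx[OF assms] by blast
  show "\<exists>d>0. \<forall>h t. 0 < h \<longrightarrow> h < d \<longrightarrow> stencil_interval (2 * h) t \<subseteq> {a..b} \<longrightarrow>
      dist (boxm a b N \<gamma> h f t) (- f' t) \<le> e"
  proof (intro exI[of _ d] conjI allI impI)
    fix h t assume "0 < h" "h < d" "stencil_interval (2 * h) t \<subseteq> {a..b}"
    moreover have "stencil_interval h t \<subseteq> stencil_interval (2 * h) t"
      using \<open>0 < h\<close> by (intro stencil_interval_mono) simp
    ultimately show "dist (boxm a b N \<gamma> h f t) (- f' t) \<le> e"
      using approx[of "- h" t] by (simp add: boxm_eq_diff_quot dist_norm norm_minus_commute)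
  qed (fact \<open>d > 0\<close>)
qed

(* The remainder p r of the second-order term is controlled by the first-order errors of x
   and x', since (p r)' = p' r + p r'. *)
lemma diff_quot_product_remainder:
  assumes "0 < h" and W: "stencil_interval (2 * h) t \<subseteq> {a..b}"
    and p: "C1_on {a..b} p p'"
    and Mp: "\<And>s. s \<in> {a..b} \<Longrightarrow> norm (p s) \<le> Mp" and Mp': "\<And>s. s \<in> {a..b} \<Longrightarrow> norm (p' s) \<le> Mp'"
    and x: "C1_on {a..b} x x'" "C1_on {a..b} x' x''"
    and err: "\<And>w. stencil_interval h w \<subseteq> {a..b} \<Longrightarrow>
               norm (diff_quot h x w - x' w) \<le> \<eta> \<and> norm (diff_quot h x' w - x'' w) \<le> \<eta>"
  shows "norm (diff_quot (- h) (\<lambda>s. p s * (diff_quot h x s - x' s)) t) \<le> (Mp' + Mp) * \<eta> * abs_moment"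
proof (rule diff_quot_bound_deriv[OF sum_coeffs,
      where g'="\<lambda>u. p' u * (diff_quot h x u - x' u) + p u * (diff_quot h x' u - x'' u)"])
  show "- h \<noteq> 0" using \<open>0 < h\<close> by simp
  let ?W = "stencil_interval (- h) t"
  have inner: "stencil_interval h w \<subseteq> {a..b}" if "w \<in> ?W" for w
    using stencil_interval_nested[of w h t] that W by auto
  have sub: "?W \<subseteq> {a..b}"
    using inner centre_in_stencil_interval by blast
  fix u assume u: "u \<in> ?W"
  have "(diff_quot h x has_vector_derivative diff_quot h x' u) (at u within ?W)"
    using has_vector_derivative_diff_quot[OF C1_onD(1)[OF x(1)] inner u] .
  moreover have "(p has_vector_derivative p' u) (at u within ?W)"
    "(x' has_vector_derivative x'' u) (at u within ?W)"
    using C1_onD(1)[OF p] C1_onD(1)[OF x(2)] u sub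
    by (meson has_vector_derivative_within_subset subsetD)+
  ultimately show "((\<lambda>s. p s * (diff_quot h x s - x' s)) has_vector_derivative
      p' u * (diff_quot h x u - x' u) + p u * (diff_quot h x' u - x'' u)) (at u within ?W)"
    by (auto intro!: derivative_eq_intros)
  have "u \<in> {a..b}" using u sub by blast
  then have "0 \<le> Mp" "0 \<le> Mp'"
    using Mp Mp' norm_ge_zero order_trans by blast+
  with \<open>u \<in> {a..b}\<close> have "norm (p' u) * norm (diff_quot h x u - x' u) + norm (p u) * norm (diff_quot h x' u - x'' u)
      \<le> Mp' * \<eta> + Mp * \<eta>"
    using Mp Mp' err[OF inner[OF u]] by (intro add_mono mult_mono) auto
  then show "norm (p' u * (diff_quot h x u - x' u) + p u * (diff_quot h x' u - x'' u)) \<le> (Mp' + Mp) * \<eta>"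
    unfolding distrib_right
    by (rule order_trans[OF norm_triangle_le[OF add_mono[OF norm_mult_ineq norm_mult_ineq]]])
qed

lemma boxm_mult_boxp_conv:
  assumes p: "C1_on {a..b} p p'" and x: "C1_on {a..b} x x'" "C1_on {a..b} x' x''"
  shows "loc_unif_conv a b (\<lambda>h t. boxm a b N \<gamma> h (\<lambda>s. p s * boxp a b N \<gamma> h x s) t)
           (\<lambda>t. - (p' t * x' t + p t * x'' t))"
proof (rule loc_unif_convI)
  fix e :: real assume "e > 0"
  obtain Mp where "Mp > 0" and Mp: "\<And>s. s \<in> {a..b} \<Longrightarrow> norm (p s) \<le> Mp"
    using continuous_on_interval_bound[OF C1_onD(3)[OF p]] by blast
  obtain Mp' where "Mp' > 0" and Mp': "\<And>s. s \<in> {a..b} \<Longrightarrow> norm (p' s) \<le> Mp'"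
    using continuous_on_interval_bound[OF C1_onD(2)[OF p]] by blast
  define \<eta> where "\<eta> = e / (2 * (abs_moment + 1) * (Mp' + Mp))"
  have "\<eta> > 0" using \<open>e > 0\<close> \<open>Mp > 0\<close> \<open>Mp' > 0\<close> abs_moment_nonneg by (simp add: \<eta>_def)
  have "e / 2 > 0" using \<open>e > 0\<close> by simp
  obtain d1 where "d1 > 0" and d1: "\<And>h s. h \<noteq> 0 \<Longrightarrow> \<bar>h\<bar> < d1 \<Longrightarrow> stencil_interval h s \<subseteq> {a..b} \<Longrightarrow>
      norm (diff_quot h (\<lambda>s. p s * x' s) s - (p' s * x' s + p s * x'' s)) \<le> e / 2"
    using diff_quot_approx[OF C1_on_mult[OF p x(2)] \<open>e / 2 > 0\<close>] by blast
  obtain d2 where "d2 > 0" and d2: "\<And>h s. h \<noteq> 0 \<Longrightarrow> \<bar>h\<bar> < d2 \<Longrightarrow> stencil_interval h s \<subseteq> {a..b} \<Longrightarrow>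
      norm (diff_quot h x s - x' s) \<le> \<eta>"
    using diff_quot_approx[OF x(1) \<open>\<eta> > 0\<close>] by blast
  obtain d3 where "d3 > 0" and d3: "\<And>h s. h \<noteq> 0 \<Longrightarrow> \<bar>h\<bar> < d3 \<Longrightarrow> stencil_interval h s \<subseteq> {a..b} \<Longrightarrow>
      norm (diff_quot h x' s - x'' s) \<le> \<eta>"
    using diff_quot_approx[OF x(2) \<open>\<eta> > 0\<close>] by blast
  show "\<exists>d>0. \<forall>h t. 0 < h \<longrightarrow> h < d \<longrightarrow> stencil_interval (2 * h) t \<subseteq> {a..b} \<longrightarrow>
      dist (boxm a b N \<gamma> h (\<lambda>s. p s * boxp a b N \<gamma> h x s) t) (- (p' t * x' t + p t * x'' t)) \<le> e"
  proof (intro exI[of _ "min d1 (min d2 d3)"] conjI allI impI)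
    show "min d1 (min d2 d3) > 0" using \<open>d1 > 0\<close> \<open>d2 > 0\<close> \<open>d3 > 0\<close> by simp
    fix h t assume "0 < h" "h < min d1 (min d2 d3)" and W: "stencil_interval (2 * h) t \<subseteq> {a..b}"
    have "stencil_interval (- h) t \<subseteq> {a..b}"
      using W stencil_interval_mono[of h "2 * h" t] \<open>0 < h\<close> by auto
    then have main: "norm (diff_quot (- h) (\<lambda>s. p s * x' s) t - (p' t * x' t + p t * x'' t)) \<le> e / 2"
      using d1[of "- h" t] \<open>0 < h\<close> \<open>h < min d1 (min d2 d3)\<close> by simp
    have "norm (diff_quot (- h) (\<lambda>s. p s * (diff_quot h x s - x' s)) t) \<le> (Mp' + Mp) * \<eta> * abs_moment"
      using \<open>h < min d1 (min d2 d3)\<close> \<open>0 < h\<close> d2 d3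
      by (intro diff_quot_product_remainder[OF \<open>0 < h\<close> W p Mp Mp' x]) auto
    also have "\<dots> = e / 2 * (abs_moment / (abs_moment + 1))"
      using \<open>Mp > 0\<close> \<open>Mp' > 0\<close> abs_moment_nonneg by (simp add: \<eta>_def)
    also have "\<dots> \<le> e / 2"
      using \<open>e > 0\<close> abs_moment_nonneg by (intro mult_left_le) auto
    finally have rem: "norm (diff_quot (- h) (\<lambda>s. p s * (diff_quot h x s - x' s)) t) \<le> e / 2" .
    have "dist (boxm a b N \<gamma> h (\<lambda>s. p s * boxp a b N \<gamma> h x s) t) (- (p' t * x' t + p t * x'' t))
      = norm ((diff_quot (- h) (\<lambda>s. p s * x' s) t - (p' t * x' t + p t * x'' t))
              + diff_quot (- h) (\<lambda>s. p s * (diff_quot h x s - x' s)) t)"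
      unfolding boxm_mult_boxp_expand[OF \<open>0 < h\<close> W, of p x x'] dist_minus dist_norm
      by (subst norm_minus_commute) (simp add: algebra_simps)
    then show "dist (boxm a b N \<gamma> h (\<lambda>s. p s * boxp a b N \<gamma> h x s) t) (- (p' t * x' t + p t * x'' t)) \<le> e"
      using norm_triangle_le[OF add_mono[OF main rem]] by simp
  qed
qed

lemma boxpv_conv:
  assumes "C2_on {a..b} x x' x''"
  shows "loc_unif_conv a b (\<lambda>\<epsilon> t. boxpv a b N \<gamma> \<epsilon> (\<lambda>s. cvec (x s)) t) (\<lambda>t. cvec (x' t))"
  unfolding loc_unif_conv_vec_iff
  using boxp_conv[OF C1_on_coordinate[OF C2_on_C1_on(1)[OF assms]]] by simp

lemma boxmv_conv:
  assumes "C2_on {a..b} x x' x''"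
  shows "loc_unif_conv a b (\<lambda>\<epsilon> t. boxmv a b N \<gamma> \<epsilon> (\<lambda>s. cvec (x s)) t) (\<lambda>t. - cvec (x' t))"
  unfolding loc_unif_conv_vec_iff
  using boxm_conv[OF C1_on_coordinate[OF C2_on_C1_on(1)[OF assms]]] by simp

(* (e) implies (a). *)
lemma Theta_conv:
  fixes P Q R :: "real \<Rightarrow> real ^ 'd ^ 'd" and J1 J2 x :: "real \<Rightarrow> real ^ 'd"
  assumes P: "C1_on {a..b} P P'" and R: "C1_on {a..b} R R'" and J1: "C1_on {a..b} J1 J1'"
    and x: "C2_on {a..b} x x' x''"
  shows "loc_unif_conv a b (\<lambda>\<epsilon> t. Theta a b N \<gamma> \<epsilon> P Q R J1 J2 x t)
           (\<lambda>t. cvec (- (P t *v x'' t) + (- P' t + 2 *\<^sub>R R t) *v x' t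
                      + (R' t + Q t) *v x t - J1' t + J2 t))"
  unfolding loc_unif_conv_vec_iff
proof
  fix i
  note X = C1_on_coordinate[OF C2_on_C1_on(1)[OF x]] and X' = C1_on_coordinate[OF C2_on_C1_on(2)[OF x]]
  note Pij = C1_on_entry[OF P, of i] and Rij = C1_on_entry[OF R, of i]
  have kinetic: "loc_unif_conv a b
      (\<lambda>h t. \<Sum>j\<in>UNIV. boxm a b N \<gamma> h (\<lambda>s. complex_of_real (P s $ i $ j)
                                       * boxp a b N \<gamma> h (\<lambda>u. complex_of_real (x u $ j)) s) t)
      (\<lambda>t. \<Sum>j\<in>UNIV. - (complex_of_real (P' t $ i $ j) * complex_of_real (x' t $ j)
                         + complex_of_real (P t $ i $ j) * complex_of_real (x'' t $ j)))"
    by (intro loc_unif_conv_sum boxm_mult_boxp_conv Pij X X') simp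
  have gyroscopic: "loc_unif_conv a b
      (\<lambda>h t. \<Sum>j\<in>UNIV. boxm a b N \<gamma> h (\<lambda>s. complex_of_real (R s $ i $ j) * complex_of_real (x s $ j)) t)
      (\<lambda>t. \<Sum>j\<in>UNIV. - (complex_of_real (R' t $ i $ j) * complex_of_real (x t $ j)
                         + complex_of_real (R t $ i $ j) * complex_of_real (x' t $ j)))"
    by (intro loc_unif_conv_sum boxm_conv C1_on_mult Rij X) simp
  have gyroscopic': "loc_unif_conv a b
      (\<lambda>h t. \<Sum>j\<in>UNIV. complex_of_real (R t $ i $ j) * boxp a b N \<gamma> h (\<lambda>u. complex_of_real (x u $ j)) t)
      (\<lambda>t. \<Sum>j\<in>UNIV. complex_of_real (R t $ i $ j) * complex_of_real (x' t $ j))"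
    by (intro loc_unif_conv_sum loc_unif_conv_mult_left boxp_conv X C1_onD(2,3)[OF Rij] C1_onD(2)[OF X]) simp
  have source: "loc_unif_conv a b (\<lambda>h t. boxm a b N \<gamma> h (\<lambda>u. complex_of_real (J1 u $ i)) t)
      (\<lambda>t. - complex_of_real (J1' t $ i))"
    by (intro boxm_conv C1_on_coordinate J1)
  show "loc_unif_conv a b (\<lambda>h t. Theta a b N \<gamma> h P Q R J1 J2 x t $ i)
      (\<lambda>t. cvec (- (P t *v x'' t) + (- P' t + 2 *\<^sub>R R t) *v x' t + (R' t + Q t) *v x t - J1' t + J2 t) $ i)"
    unfolding Theta_component Euler_Lagrange_component
    by (intro loc_unif_conv_add loc_unif_conv_diff loc_unif_conv_const kinetic gyroscopic gyroscopic' source)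
qed

(* (e) implies (f), with coefficients k given by the ramp convolution of the defect. *)
definition correction :: "int \<Rightarrow> complex" where
  "correction n = ramp_conv N defect (int N - n)"

lemma defect_moments: "(\<Sum>i\<in>nodes. defect i) = 0" "(\<Sum>i\<in>nodes. of_int i * defect i) = 0"
  using sum_defect_mult[of "\<lambda>i. 1"] sum_defect_mult[of of_int] sum_coeffs first_moment
  by (simp_all add: mult.commute)

lemma boxp_decomposition:
  assumes "\<epsilon> > 0" and t: "t \<in> {a + 2 * real N * \<epsilon>..b - 2 * real N * \<epsilon>}"
  shows "boxp a b N \<gamma> \<epsilon> y t = boxrs a b 1 0 \<epsilon> y t
     + (\<Sum>l\<in>{- (int N - 1)..int N - 1}. correction (l + int N) * boxrs a b 1 (-1) \<epsilon> y (t - of_int l * \<epsilon>))"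
proof -
  define Y where "Y j = y (t + of_int j * \<epsilon>)" for j
  let ?D = "\<lambda>m. Y (m - 1) - 2 * Y m + Y (m + 1)"
  have "boxp a b N \<gamma> \<epsilon> y t = (\<Sum>l\<in>nodes. \<gamma> l * Y l) / of_real \<epsilon>"
    using boxp_eq_diff_quot[OF assms(1) safety_interval_stencil[OF assms]]
    by (simp add: diff_quot_def Y_def sum_divide_distrib)
  also have "(\<Sum>l\<in>nodes. \<gamma> l * Y l) = Y 1 - Y 0 + (\<Sum>m\<in>{- (int N - 1)..int N - 1}. ramp_conv N defect m * ?D m)"
    using sum_defect_mult[of Y] summation_by_parts_twice[OF defect_moments, of Y] by simp
  also have "(\<Sum>m\<in>{- (int N - 1)..int N - 1}. ramp_conv N defect m * ?D m)
      = (\<Sum>l\<in>{- (int N - 1)..int N - 1}. correction (l + int N) * ?D (- l))"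
    by (rule sum.reindex_bij_witness[of _ uminus uminus]) (auto simp: correction_def)
  also have "(Y 1 - Y 0 + (\<Sum>l\<in>{- (int N - 1)..int N - 1}. correction (l + int N) * ?D (- l))) / of_real \<epsilon>
      = boxrs a b 1 0 \<epsilon> y t
        + (\<Sum>l\<in>{- (int N - 1)..int N - 1}. correction (l + int N) * boxrs a b 1 (-1) \<epsilon> y (t - of_int l * \<epsilon>))"
  proof -
    note node = safety_node[OF assms]
    have forward: "boxrs a b 1 0 \<epsilon> y t = (Y 1 - Y 0) / of_real \<epsilon>"
      using boxrs_interior[OF assms(1), where u=t] node[of 0] N_pos by (simp add: Y_def)
    have second: "boxrs a b 1 (-1) \<epsilon> y (t - of_int l * \<epsilon>) = ?D (- l) / of_real \<epsilon>"
      if "l \<in> {- (int N - 1)..int N - 1}" for l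
    proof -
      have "t - of_int l * \<epsilon> - \<epsilon> = t + of_int (- l - 1) * \<epsilon>" "t - of_int l * \<epsilon> = t + of_int (- l) * \<epsilon>"
           "t - of_int l * \<epsilon> + \<epsilon> = t + of_int (- l + 1) * \<epsilon>"
        by (simp_all add: algebra_simps)
      then show ?thesis
        using boxrs_interior[OF assms(1) node[OF that]] by (simp add: Y_def algebra_simps)
    qed
    have "(\<Sum>l\<in>{- (int N - 1)..int N - 1}. correction (l + int N) * boxrs a b 1 (-1) \<epsilon> y (t - of_int l * \<epsilon>))
        = (\<Sum>l\<in>{- (int N - 1)..int N - 1}. correction (l + int N) * ?D (- l)) / of_real \<epsilon>"
      unfolding sum_divide_distrib by (intro sum.cong refl) (simp only: second times_divide_eq_right)
    then show ?thesis by (simp only: forward add_divide_distrib)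
  qed
  finally show ?thesis .
qed

end

theorem mainTheorem5:
  fixes a b :: real and N :: nat and \<gamma> :: "int \<Rightarrow> complex"
  assumes "a < b" and "N \<ge> 1"
  defines "A \<equiv> (\<forall>(P :: real \<Rightarrow> real ^ 'd ^ 'd) P' Q R R' (J1 :: real \<Rightarrow> real ^ 'd) J1' J2
                    (x :: real \<Rightarrow> real ^ 'd) x' x''.
             smooth_on {a..b} P \<and> smooth_on {a..b} Q \<and> smooth_on {a..b} R
             \<and> smooth_on {a..b} J1 \<and> smooth_on {a..b} J2
             \<and> (\<forall>t\<in>{a..b}. (P has_vector_derivative P' t) (at t within {a..b}))
             \<and> (\<forall>t\<in>{a..b}. (R has_vector_derivative R' t) (at t within {a..b}))
             \<and> (\<forall>t\<in>{a..b}. (J1 has_vector_derivative J1' t) (at t within {a..b}))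
             \<and> (\<forall>t\<in>{a..b}. transpose (P t) = P t)
             \<and> (\<forall>t\<in>{a..b}. transpose (Q t) = Q t)
             \<and> (\<forall>t\<in>{a..b}. transpose (R t) = - R t)
             \<and> C2_on {a..b} x x' x''
             \<longrightarrow> loc_unif_conv a b (\<lambda>\<epsilon> t. Theta a b N \<gamma> \<epsilon> P Q R J1 J2 x t)
                   (\<lambda>t. cvec (- (P t *v x'' t) + (- P' t + 2 *\<^sub>R R t) *v x' t
                              + (R' t + Q t) *v x t - J1' t + J2 t)))"
  defines "B \<equiv> (\<forall>(x :: real \<Rightarrow> real ^ 'd) x' x''. C2_on {a..b} x x' x'' \<longrightarrow>
             loc_unif_conv a b (\<lambda>\<epsilon> t. boxpv a b N \<gamma> \<epsilon> (\<lambda>s. cvec (x s)) t) (\<lambda>t. cvec (x' t)))"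
  defines "C \<equiv> (\<forall>(x :: real \<Rightarrow> real ^ 'd) x' x''. C2_on {a..b} x x' x'' \<longrightarrow>
             loc_unif_conv a b (\<lambda>\<epsilon> t. boxmv a b N \<gamma> \<epsilon> (\<lambda>s. cvec (x s)) t) (\<lambda>t. - cvec (x' t)))"
  defines "D \<equiv> (loc_unif_conv a b (\<lambda>\<epsilon> t. boxp a b N \<gamma> \<epsilon> (\<lambda>s. 1) t) (\<lambda>t. 0)
             \<and> loc_unif_conv a b (\<lambda>\<epsilon> t. boxp a b N \<gamma> \<epsilon> (\<lambda>s. complex_of_real s) t) (\<lambda>t. 1))"
  defines "E \<equiv> ((\<Sum>l\<in>{- int N..int N}. \<gamma> l) = 0 \<and> (\<Sum>l\<in>{- int N..int N}. of_int l * \<gamma> l) = 1)"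
  defines "F \<equiv> (\<exists>k :: int \<Rightarrow> complex. \<forall>\<epsilon>>0. \<forall>(x :: real \<Rightarrow> real ^ 'd).
             \<forall>t\<in>{a + 2 * real N * \<epsilon>..b - 2 * real N * \<epsilon>}.
               boxpv a b N \<gamma> \<epsilon> (\<lambda>s. cvec (x s)) t
               = boxrsv a b 1 0 \<epsilon> (\<lambda>s. cvec (x s)) t
                 + (\<Sum>l\<in>{- (int N - 1)..int N - 1}.
                      k (l + int N) *s boxrsv a b 1 (-1) \<epsilon> (\<lambda>s. cvec (x s)) (t - of_int l * \<epsilon>)))"
  shows "(A \<longleftrightarrow> B) \<and> (B \<longleftrightarrow> C) \<and> (C \<longleftrightarrow> D) \<and> (D \<longleftrightarrow> E) \<and> (E \<longleftrightarrow> F)"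
proof -
  interpret stencil a b N \<gamma> using assms(1,2) by unfold_locales
  have "A \<and> B \<and> C \<and> D \<and> F" if E
  proof -
    interpret consistent_stencil a b N \<gamma> using \<open>E\<close> by unfold_locales (simp_all add: E_def)
    have A unfolding A_def
      by (intro allI impI, elim conjE) (intro Theta_conv smooth_on_C1_on[OF assms(1)]; assumption)
    moreover have B unfolding B_def using boxpv_conv by blast
    moreover have C unfolding C_def using boxmv_conv by blast
    moreover have D unfolding D_def
      using boxp_conv[OF C2_on_C1_on(1)[OF C2_on_const]]
        boxp_conv[OF C2_on_C1_on(1)[OF C2_on_scaleR_const[of _ "1 :: complex"]]]
      by (simp add: scaleR_conv_of_real)
    moreover have F unfolding F_def
      by (intro exI[of _ correction] allI impI ballI) (simp add: vec_eq_iff boxp_decomposition)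
    ultimately show ?thesis by blast
  qed
  moreover have E if A
    unfolding E_def
    by (rule consistent_of_source_limits)
       (use that[unfolded A_def, rule_format, where P="\<lambda>s. 0" and P'="\<lambda>s. 0" and Q="\<lambda>s. 0"
          and R="\<lambda>s. 0" and R'="\<lambda>s. 0" and ?J2.0="\<lambda>s. 0" and x="\<lambda>s. 0" and x'="\<lambda>s. 0"
          and x''="\<lambda>s. 0"] in \<open>auto simp: smooth_on_const C2_on_const\<close>)
  moreover have E if B using that unfolding B_def E_def by (intro consistent_of_boxpv_limits) blast
  moreover have E if C using that unfolding C_def E_def by (intro consistent_of_boxmv_limits) blast
  moreover have E if D using that unfolding D_def E_def by (intro consistent_of_forward_limits) blast+
  moreover have E if F using that unfolding F_def E_def by (elim exE) (erule consistent_of_decomposition)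
  ultimately show ?thesis by blast
qed

end
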